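(* For every integer $p\ge0$, $$\sum_{k=1}^\infty\frac{1}{(2k-1)(2k)^p(2k+1)}=\begin{cases}\dfrac12-\displaystyle\sum_{j=1}^{p/2}2^{-2j}\zeta(2j), & p\text{ even},\\[8pt] -\dfrac12+\ln 2-\displaystyle\sum_{j=1}^{(p-1)/2}2^{-(2j+1)}\zeta(2j+1), & p\text{ odd},\end{cases}$$ where empty sums are $0$.
   Context: $\zeta(s)=\sum_{k\ge1}k^{-s}$ denotes the Riemann zeta function. *)

theory Defs
  imports "HOL-Analysis.Analysis"
begin

definition zeta :: "real \<Rightarrow> real" where
  "zeta s = (\<Sum>k. 1 / (real (Suc k)) powr s)"

end

theory Submission
  imports Defs "HOL-Real_Asymp.Real_Asymp"
begin

text \<open>Write \<open>x = 2k\<close>. The partial fraction identity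
  \<open>1/((x-1) x^(p+2) (x+1)) = 1/((x-1) x^p (x+1)) - 1/x^(p+2)\<close>
  lowers \<open>p\<close> by two at the cost of \<open>2^-(p+2) \<zeta>(p+2)\<close>. This leaves \<open>p = 0\<close>,
  a telescoping series with sum \<open>1/2\<close>, and \<open>p = 1\<close>, where
  \<open>1/((x-1) x (x+1)) = (1/(x-1) - 1/x) - 1/((x-1)(x+1))\<close> brings in the
  alternating harmonic series, whose sum is \<open>ln 2\<close>.\<close>

definition sandwich :: "nat \<Rightarrow> 'a::field \<Rightarrow> 'a" where
  "sandwich p x = 1 / ((x - 1) * x ^ p * (x + 1))"

lemma sandwich_Suc_Suc:
  fixes x :: "'a::field"
  assumes "x \<noteq> 0" "x - 1 \<noteq> 0" "x + 1 \<noteq> 0"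
  shows "sandwich (Suc (Suc p)) x = sandwich p x - 1 / x ^ Suc (Suc p)"
  using assms unfolding sandwich_def by (simp add: divide_simps) (simp add: algebra_simps)

lemma sandwich_0:
  fixes x :: "'a::field_char_0"
  assumes "x - 1 \<noteq> 0" "x + 1 \<noteq> 0"
  shows "sandwich 0 x = (1 / (x - 1) - 1 / (x + 1)) / 2"
  using assms unfolding sandwich_def by (simp add: divide_simps)

lemma sandwich_1:
  fixes x :: "'a::field"
  assumes "x \<noteq> 0" "x - 1 \<noteq> 0" "x + 1 \<noteq> 0"
  shows "sandwich 1 x = (1 / (x - 1) - 1 / x) - sandwich 0 x"
  using assms unfolding sandwich_def by (simp add: divide_simps)

lemma zeta_sums:
  assumes "1 < s"
  shows "(\<lambda>k. 1 / real (Suc k) powr s) sums zeta s"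
proof -
  have "summable (\<lambda>k. real k powr (- s))"
    using assms by (simp add: summable_real_powr_iff)
  then have "summable (\<lambda>k. real (Suc k) powr (- s))"
    by (subst summable_Suc_iff)
  then show ?thesis
    unfolding zeta_def by (intro summable_sums) (simp add: powr_minus_divide)
qed

lemma zeta_scaled_sums:
  assumes "1 < s" "0 < c"
  shows "(\<lambda>k. 1 / (c * real (Suc k)) powr s) sums (c powr (- s) * zeta s)"
proof -
  have "(\<lambda>k. c powr (- s) * (1 / real (Suc k) powr s)) sums (c powr (- s) * zeta s)"
    using assms(1) by (intro sums_mult zeta_sums)
  moreover have "c powr (- s) * (1 / real (Suc k) powr s) = 1 / (c * real (Suc k)) powr s" for k
    using assms(2) by (simp add: powr_mult powr_minus divide_simps)
  ultimately show ?thesis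
    by simp
qed

lemma sandwich_sums_0: "(\<lambda>n. sandwich 0 (2 * real (Suc n))) sums (1 / 2)"
proof -
  have "(\<lambda>n. 1 / (2 * real n + 1)) \<longlonglongrightarrow> 0"
    by real_asymp
  then have "(\<lambda>n. 1 / (2 * real n + 1) - 1 / (2 * real (Suc n) + 1)) sums 1"
    using telescope_sums' by fastforce
  then have "(\<lambda>n. (1 / (2 * real n + 1) - 1 / (2 * real (Suc n) + 1)) / 2) sums (1 / 2)"
    by (rule sums_divide)
  moreover have "sandwich 0 (2 * real (Suc n)) = (1 / (2 * real n + 1) - 1 / (2 * real (Suc n) + 1)) / 2"
    for n :: nat
    by (subst sandwich_0) (auto simp: algebra_simps)
  ultimately show ?thesis
    by (simp only:)
qed

lemma sandwich_sums_1: "(\<lambda>n. sandwich 1 (2 * real (Suc n))) sums (ln 2 - 1 / 2)"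
proof -
  have "(\<lambda>n. 1 / (2 * real (Suc n) - 1) - 1 / (2 * real (Suc n))) sums ln 2"
    using alternating_harmonic_series_sums'
    by (simp add: inverse_eq_divide algebra_simps)
  then have "(\<lambda>n. (1 / (2 * real (Suc n) - 1) - 1 / (2 * real (Suc n)))
              - sandwich 0 (2 * real (Suc n))) sums (ln 2 - 1 / 2)"
    by (intro sums_diff sandwich_sums_0)
  moreover have "sandwich 1 (2 * real (Suc n)) =
      (1 / (2 * real (Suc n) - 1) - 1 / (2 * real (Suc n))) - sandwich 0 (2 * real (Suc n))"
    for n :: nat
    by (subst sandwich_1) auto
  ultimately show ?thesis
    by simp
qed

lemma sandwich_sums_Suc_Suc:
  assumes "(\<lambda>n. sandwich p (2 * real (Suc n))) sums S"
  shows "(\<lambda>n. sandwich (Suc (Suc p)) (2 * real (Suc n)))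
           sums (S - 2 powr (- real (Suc (Suc p))) * zeta (real (Suc (Suc p))))"
proof -
  have "(\<lambda>n. sandwich p (2 * real (Suc n)) - 1 / (2 * real (Suc n)) powr real (Suc (Suc p)))
          sums (S - 2 powr (- real (Suc (Suc p))) * zeta (real (Suc (Suc p))))"
    by (intro sums_diff assms zeta_scaled_sums) simp_all
  moreover have "sandwich (Suc (Suc p)) (2 * real (Suc n)) =
      sandwich p (2 * real (Suc n)) - 1 / (2 * real (Suc n)) powr real (Suc (Suc p))" for n
  proof -
    have "2 * real (Suc n) \<noteq> 0" "2 * real (Suc n) - 1 \<noteq> 0" "2 * real (Suc n) + 1 \<noteq> 0"
      by simp_all
    from sandwich_Suc_Suc [OF this] show ?thesis
      by (simp add: powr_realpow del: power_Suc of_nat_Suc)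
  qed
  ultimately show ?thesis
    by simp
qed

lemma sandwich_sums_even:
  "(\<lambda>n. sandwich (2 * m) (2 * real (Suc n)))
     sums (1 / 2 - (\<Sum>j=1..m. 2 powr (- (2 * real j)) * zeta (2 * real j)))"
proof (induction m)
  case 0
  then show ?case
    using sandwich_sums_0 by simp
next
  case (Suc m)
  from sandwich_sums_Suc_Suc [OF Suc.IH] show ?case
    by (simp add: algebra_simps)
qed

lemma sandwich_sums_odd:
  "(\<lambda>n. sandwich (2 * m + 1) (2 * real (Suc n)))
     sums (- 1 / 2 + ln 2 - (\<Sum>j=1..m. 2 powr (- (2 * real j + 1)) * zeta (2 * real j + 1)))"
proof (induction m)
  case 0
  then show ?case
    using sandwich_sums_1 by simp
next
  case (Suc m)
  from sandwich_sums_Suc_Suc [OF Suc.IH] show ?case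
    by (simp add: algebra_simps)
qed

lemma sandwich_sums:
  "(\<lambda>n. sandwich p (2 * real (Suc n))) sums
     (if even p
      then 1/2 - (\<Sum>j=1..p div 2. 2 powr (-(2 * real j)) * zeta (2 * real j))
      else -1/2 + ln 2 - (\<Sum>j=1..(p - 1) div 2. 2 powr (-(2 * real j + 1)) * zeta (2 * real j + 1)))"
proof (cases "even p")
  case True
  then obtain m where "p = 2 * m"
    by blast
  then show ?thesis
    using sandwich_sums_even [of m] by simp
next
  case False
  then obtain m where "p = 2 * m + 1"
    using oddE by blast
  then show ?thesis
    using sandwich_sums_odd [of m] by simp
qed

theorem corollary2:
  fixes p :: nat
  shows "(\<lambda>n. let k = real (Suc n) in 1 / ((2*k - 1) * (2*k)^p * (2*k + 1))) sums
           (if even p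
            then 1/2 - (\<Sum>j=1..p div 2. 2 powr (-(2 * real j)) * zeta (2 * real j))
            else -1/2 + ln 2 - (\<Sum>j=1..(p - 1) div 2. 2 powr (-(2 * real j + 1)) * zeta (2 * real j + 1)))"
  using sandwich_sums [of p] by (simp only: sandwich_def Let_def)

end
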